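(* Let $G=(V,E)$ be an undirected graph with $n$ vertices and non-negative edge weights of maximum value $W$, let $K$ be a positive integer and $\varepsilon>0$. Let $B\subseteq V$ be obtained by including each vertex independently with probability $C\log(n)/K$, for a sufficiently large constant $C>0$. Consider the oracle that, on query $(s,t)$, returns $+\infty$ if $s$ and $t$ are in different connected components and otherwise returns $\min(\widehat d_1,\widehat d_2)$, where $\widehat d_1=\min\{d_{1/\varepsilon}(s,v)+d_{1/\varepsilon}(v,t): v\in A_{1/\varepsilon}(s)\cap A_{1/\varepsilon}(t)\}$ and $\widehat d_2=\min\{d(s,p(v))+d(p(v),t): v\in A_{1/\varepsilon}(s)\cup A_{1/\varepsilon}(t)\}$. Then with high probability, simultaneously for all queries $(s,t)\in V^2$, the returned value $\widehat d(s,t)$ satisfies $d(s,t)\le \widehat d(s,t)\le (1+\varepsilon)\,d(s,t)+2W$.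
   Context: $d(u,v)$ is the weighted distance in $G$. $K[v]$ is a set of the $K$ vertices closest to $v$ (including $v$; ties arbitrary). $H$ is the auxiliary graph on $V$ with, for each $v$, an edge (hop) from $v$ to each $v'\in K[v]\setminus\{v\}$ of weight $d(v,v')$, hops from $v$ going only to elements of $K[v]$. $A_{1/\varepsilon}(x)$ is the set of vertices reachable from $x$ in $H$ with at most $\lceil 1/\varepsilon\rceil$ hops. For $v\in A_{1/\varepsilon}(s)$, $d_{1/\varepsilon}(s,v)$ is the minimum total weight of a walk in $H$ from $s$ to $v$ with at most $\lceil1/\varepsilon\rceil$ hops; for $v\in A_{1/\varepsilon}(t)$, $d_{1/\varepsilon}(v,t)$ is the minimum total weight of such a walk from $t$ to $v$. $p(v)\in B$ denotes a pivot in $B$ closest to $v$ in $G$. "With high probability" means with probability at least $1-n^{-c}$ for some constant $c>0$. *)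

theory Defs
  imports "HOL-Probability.Probability"
begin

definition is_walk :: "('a \<times> 'a) set \<Rightarrow> 'a list \<Rightarrow> bool" where
  "is_walk R xs \<longleftrightarrow> xs \<noteq> [] \<and> (\<forall>i. Suc i < length xs \<longrightarrow> (xs ! i, xs ! Suc i) \<in> R)"

definition walk_weight :: "('a \<Rightarrow> 'a \<Rightarrow> 'b::comm_monoid_add) \<Rightarrow> 'a list \<Rightarrow> 'b" where
  "walk_weight f xs = (\<Sum>i < length xs - 1. f (xs ! i) (xs ! Suc i))"

definition walks :: "('a \<times> 'a) set \<Rightarrow> 'a \<Rightarrow> 'a \<Rightarrow> 'a list set" where
  "walks R x y = {xs. is_walk R xs \<and> hd xs = x \<and> last xs = y}"

definition gdist :: "('a \<times> 'a) set \<Rightarrow> ('a \<Rightarrow> 'a \<Rightarrow> real) \<Rightarrow> 'a \<Rightarrow> 'a \<Rightarrow> ereal" where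
  "gdist E w u v = Inf (walk_weight (\<lambda>a b. ereal (w a b)) ` walks E u v)"

definition hop_walks :: "('a \<times> 'a) set \<Rightarrow> nat \<Rightarrow> 'a \<Rightarrow> 'a \<Rightarrow> 'a list set" where
  "hop_walks R h x y = {xs \<in> walks R x y. length xs \<le> h + 1}"

definition reach_hops :: "('a \<times> 'a) set \<Rightarrow> nat \<Rightarrow> 'a \<Rightarrow> 'a set" where
  "reach_hops R h x = {y. hop_walks R h x y \<noteq> {}}"

definition hop_dist :: "('a \<times> 'a) set \<Rightarrow> ('a \<Rightarrow> 'a \<Rightarrow> ereal) \<Rightarrow> nat \<Rightarrow> 'a \<Rightarrow> 'a \<Rightarrow> ereal" where
  "hop_dist R wt h x y = Inf (walk_weight wt ` hop_walks R h x y)"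

definition knn_sets :: "'a set \<Rightarrow> ('a \<times> 'a) set \<Rightarrow> ('a \<Rightarrow> 'a \<Rightarrow> real) \<Rightarrow> nat \<Rightarrow> ('a \<Rightarrow> 'a set) \<Rightarrow> bool" where
  "knn_sets V E w K Ksel \<longleftrightarrow> (\<forall>v\<in>V. v \<in> Ksel v \<and> Ksel v \<subseteq> V \<and> card (Ksel v) = min K (card V) \<and>
      (\<forall>x\<in>Ksel v. \<forall>y\<in>V - Ksel v. gdist E w v x \<le> gdist E w v y))"

definition hop_graph :: "'a set \<Rightarrow> ('a \<Rightarrow> 'a set) \<Rightarrow> ('a \<times> 'a) set" where
  "hop_graph V Ksel = {(v, v'). v \<in> V \<and> v' \<in> Ksel v \<and> v' \<noteq> v}"

definition pivot_fun :: "'a set \<Rightarrow> ('a \<times> 'a) set \<Rightarrow> ('a \<Rightarrow> 'a \<Rightarrow> real) \<Rightarrow> ('a set \<Rightarrow> 'a \<Rightarrow> 'a) \<Rightarrow> bool" where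
  "pivot_fun V E w piv \<longleftrightarrow> (\<forall>B. B \<subseteq> V \<and> B \<noteq> {} \<longrightarrow>
      (\<forall>v\<in>V. piv B v \<in> B \<and> (\<forall>b\<in>B. gdist E w v (piv B v) \<le> gdist E w v b)))"

(* the dist_query answer dhat(s,t); hops in H have weight d(v,v'); h = \<lceil>1/\<epsilon>\<rceil> *)
definition dist_query :: "'a set \<Rightarrow> ('a \<times> 'a) set \<Rightarrow> ('a \<Rightarrow> 'a \<Rightarrow> real) \<Rightarrow> ('a \<Rightarrow> 'a set) \<Rightarrow>
    ('a set \<Rightarrow> 'a \<Rightarrow> 'a) \<Rightarrow> nat \<Rightarrow> 'a set \<Rightarrow> 'a \<Rightarrow> 'a \<Rightarrow> ereal" where
  "dist_query V E w Ksel piv h B s t =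
     (if (s, t) \<notin> E\<^sup>* then \<infinity> else
      (let R = hop_graph V Ksel; hw = gdist E w;
           As = reach_hops R h s; At = reach_hops R h t;
           d1 = Inf ((\<lambda>v. hop_dist R hw h s v + hop_dist R hw h t v) ` (As \<inter> At));
           d2 = (if B = {} then \<infinity> else
                 Inf ((\<lambda>v. gdist E w s (piv B v) + gdist E w (piv B v) t) ` (As \<union> At)))
       in min d1 d2))"

end

theory Submission
  imports Defs
begin

(* Fix an s-t walk x 0, ..., x m of weight L and let theta = L / (2h). Walk greedily along it in
   the hop graph: one hop from x i reaches, at path cost, every later path vertex up to the first
   one, x (j+1), outside K[x i]. Either this hop advances more than theta along the path, or
   x (j+1) is within theta + W of x i; in the latter case B hits K[x i] (which is not all of V), so
   the pivot of x i is within theta + W of x i and the detour through it costs at most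
   L + 2 theta + 2W <= (1 + eps) L + 2W. Otherwise, after h hops from s and h hops from t, the
   explored prefix and suffix each carry more than half of L, so they share a vertex and
   d1 <= L. Taking the infimum over all walks gives the upper bound; the lower bound holds since
   both estimates are weights of s-t walks. Finally each K[v] different from V has K elements and
   is missed by B with probability (1 - C ln n / K)^K <= n^(-C), so a union bound over the n
   vertices shows that B hits all of them with probability at least 1 - n^(1-C). *)

lemma is_walk_singleton [simp]: "is_walk R [a]"
  by (simp add: is_walk_def)

lemma not_is_walk_Nil [simp]: "\<not> is_walk R []"
  by (simp add: is_walk_def)

lemma is_walk_Cons_Cons: "is_walk R (a # b # ys) \<longleftrightarrow> (a, b) \<in> R \<and> is_walk R (b # ys)"
  unfolding is_walk_def by (auto simp: nth_Cons split: nat.splits)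

lemma walk_weight_singleton [simp]: "walk_weight wt [a] = 0"
  by (simp add: walk_weight_def)

lemma walk_weight_Cons_Cons: "walk_weight wt (a # b # ys) = wt a b + walk_weight wt (b # ys)"
  unfolding walk_weight_def by (simp add: sum.lessThan_Suc_shift del: sum.lessThan_Suc)

lemma walk_weight_ereal: "walk_weight (\<lambda>a b. ereal (w a b)) xs = ereal (walk_weight w xs)"
  by (simp add: walk_weight_def)

lemma is_walk_snoc:
  assumes "is_walk R ys" "(last ys, y) \<in> R"
  shows "is_walk R (ys @ [y]) \<and> walk_weight wt (ys @ [y]) = walk_weight wt ys + wt (last ys) y"
  using assms
  by (induction ys rule: induct_list012) (auto simp: is_walk_Cons_Cons walk_weight_Cons_Cons add.assoc)

lemma is_walk_append:
  fixes wt :: "'a \<Rightarrow> 'a \<Rightarrow> 'b::comm_monoid_add"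
  assumes "is_walk R p" "is_walk R q" "last p = hd q"
  shows "is_walk R (p @ tl q) \<and> walk_weight wt (p @ tl q) = walk_weight wt p + walk_weight wt q
    \<and> hd (p @ tl q) = hd p \<and> last (p @ tl q) = last q"
  using assms
proof (induction p rule: induct_list012)
  case (2 a)
  then have "q = a # tl q" by (cases q) auto
  with 2 show ?case by (metis append.left_neutral append_Cons add_0 walk_weight_singleton list.sel(1))
next
  case (3 a b zs)
  then show ?case
    by (cases q) (auto simp: is_walk_Cons_Cons walk_weight_Cons_Cons add.assoc)
qed simp

lemma is_walk_rev:
  assumes "sym R" "\<And>a b. (a, b) \<in> R \<Longrightarrow> wt a b = wt b a" "is_walk R p"
  shows "is_walk R (rev p) \<and> walk_weight wt (rev p) = walk_weight wt p"
  using assms(3)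
proof (induction p rule: induct_list012)
  case (3 a b zs)
  then have ih: "is_walk R (rev (b # zs)) \<and> walk_weight wt (rev (b # zs)) = walk_weight wt (b # zs)"
    and ab: "(a, b) \<in> R" by (auto simp: is_walk_Cons_Cons)
  then have "(b, a) \<in> R" using assms(1) by (meson symD)
  then show ?case
    using is_walk_snoc[of R "rev (b # zs)" a wt] ih assms(2)[OF ab]
    by (auto simp: walk_weight_Cons_Cons add.commute)
qed simp_all

lemma is_walk_rtrancl: "is_walk R p \<Longrightarrow> (hd p, last p) \<in> R\<^sup>*"
  by (induction p rule: induct_list012)
     (auto simp: is_walk_Cons_Cons intro: converse_rtrancl_into_rtrancl)

lemma walk_weight_nonneg:
  fixes wt :: "'a \<Rightarrow> 'a \<Rightarrow> 'b::ordered_comm_monoid_add"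
  assumes "\<And>a b. (a, b) \<in> R \<Longrightarrow> 0 \<le> wt a b" "is_walk R p"
  shows "0 \<le> walk_weight wt p"
  using assms(2)
  by (induction p rule: induct_list012) (auto simp: is_walk_Cons_Cons walk_weight_Cons_Cons assms(1))

lemma walk_weight_ge_endpoints:
  fixes d :: "'a \<Rightarrow> 'a \<Rightarrow> 'b::ordered_comm_monoid_add"
  assumes "\<And>u v z. d u z \<le> d u v + d v z" "\<And>u. d u u \<le> 0" "ys \<noteq> []"
  shows "d (hd ys) (last ys) \<le> walk_weight d ys"
  using assms(3)
proof (induction ys rule: induct_list012)
  case (3 a b zs)
  then have "d b (last (b # zs)) \<le> walk_weight d (b # zs)" by simp
  then have "d a (last (b # zs)) \<le> d a b + walk_weight d (b # zs)"
    using assms(1)[of a "last (b # zs)" b] by (meson add_left_mono order_trans)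
  then show ?case by (simp add: walk_weight_Cons_Cons)
qed (simp_all add: assms(2))

lemma walk_segment:
  assumes "is_walk R xs" "i \<le> j" "j < length xs"
  shows "map ((!) xs) [i..<Suc j] \<in> walks R (xs ! i) (xs ! j)
    \<and> walk_weight wt (map ((!) xs) [i..<Suc j]) = (\<Sum>q = i..<j. wt (xs ! q) (xs ! Suc q))"
proof -
  define ys where "ys = map ((!) xs) [i..<Suc j]"
  have len: "length ys = Suc j - i" using assms(2) by (simp add: ys_def)
  have nth: "ys ! q = xs ! (i + q)" if "q < Suc j - i" for q
    using that assms(2) unfolding ys_def by (subst nth_map_upt) auto
  have ne: "ys \<noteq> []" using len assms(2) by auto
  have "is_walk R ys"
    unfolding is_walk_def
  proof (intro conjI allI impI ne)
    fix q assume q: "Suc q < length ys"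
    then have "(xs ! (i + q), xs ! Suc (i + q)) \<in> R"
      using assms len unfolding is_walk_def by simp
    then show "(ys ! q, ys ! Suc q) \<in> R" using nth[of q] nth[of "Suc q"] q len by simp
  qed
  moreover have "hd ys = xs ! i" "last ys = xs ! j"
    using ne len nth[of 0] nth[of "j - i"] assms(2) by (auto simp: hd_conv_nth last_conv_nth)
  moreover have "walk_weight wt ys = (\<Sum>q<j - i. wt (xs ! (i + q)) (xs ! Suc (i + q)))"
    unfolding walk_weight_def len by (intro sum.cong) (auto simp: nth)
  moreover have "\<dots> = (\<Sum>q = i..<j. wt (xs ! q) (xs ! Suc q))"
    by (simp add: sum.atLeastLessThan_shift_0[of _ i j] atLeast0LessThan)
  ultimately show ?thesis unfolding ys_def walks_def by simp
qed

context
  fixes E :: "('a \<times> 'a) set" and w :: "'a \<Rightarrow> 'a \<Rightarrow> real"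
  assumes weights_nonneg: "\<And>u v. (u, v) \<in> E \<Longrightarrow> 0 \<le> w u v"
begin

lemma gdist_le_walk_weight: "p \<in> walks E u v \<Longrightarrow> gdist E w u v \<le> ereal (walk_weight w p)"
  unfolding gdist_def walk_weight_ereal[symmetric] by (rule INF_lower)

lemma gdist_nonneg: "0 \<le> gdist E w u v"
  unfolding gdist_def
  by (rule INF_greatest, rule walk_weight_nonneg[of E]) (auto simp: walks_def weights_nonneg)

lemma gdist_self: "gdist E w u u = 0"
proof -
  have "[u] \<in> walks E u u" by (simp add: walks_def)
  then have "gdist E w u u \<le> 0" using gdist_le_walk_weight[of "[u]" u u] by (simp add: zero_ereal_def)
  then show ?thesis using gdist_nonneg[of u u] by simp
qed

lemma gdist_commute:
  assumes "sym E" "\<And>a b. (a, b) \<in> E \<Longrightarrow> w a b = w b a"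
  shows "gdist E w u v = gdist E w v u"
proof -
  have le: "gdist E w u v \<le> gdist E w v u" for u v
    unfolding gdist_def
  proof (rule INF_greatest)
    fix p assume "p \<in> walks E v u"
    then have "rev p \<in> walks E u v" and
      "walk_weight (\<lambda>a b. ereal (w a b)) (rev p) = walk_weight (\<lambda>a b. ereal (w a b)) p"
      using is_walk_rev[of E "\<lambda>a b. ereal (w a b)" p] assms
      by (auto simp: walks_def hd_rev last_rev)
    then show "Inf (walk_weight (\<lambda>a b. ereal (w a b)) ` walks E u v)
        \<le> walk_weight (\<lambda>a b. ereal (w a b)) p"
      by (metis INF_lower)
  qed
  show ?thesis using le[of u v] le[of v u] by simp
qed

lemma gdist_triangle: "gdist E w u z \<le> gdist E w u v + gdist E w v z"
proof (cases "walks E u v = {} \<or> walks E v z = {}")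
  case True
  then have "gdist E w u v = \<infinity> \<or> gdist E w v z = \<infinity>" by (auto simp: gdist_def top_ereal_def)
  then show ?thesis using gdist_nonneg[of u v] gdist_nonneg[of v z] by auto
next
  case False
  let ?f = "walk_weight (\<lambda>a b. ereal (w a b))"
  have nonneg: "0 \<le> ?f p" if "p \<in> walks E x y" for p x y
    using that by (intro walk_weight_nonneg[of E]) (auto simp: walks_def weights_nonneg)
  have concat: "gdist E w u z \<le> ?f p + ?f q" if "p \<in> walks E u v" "q \<in> walks E v z" for p q
  proof -
    have "p @ tl q \<in> walks E u z" "?f (p @ tl q) = ?f p + ?f q"
      using is_walk_append[of E p q] that by (auto simp: walks_def)
    then show ?thesis unfolding gdist_def by (metis INF_lower)
  qed
  have "gdist E w u v + gdist E w v z = (INF p\<in>walks E u v. ?f p + gdist E w v z)"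
    unfolding gdist_def[of E w u v]
    by (rule INF_ereal_add_left[symmetric]) (use False gdist_nonneg[of v z] nonneg in auto)
  also have "\<dots> = (INF p\<in>walks E u v. INF q\<in>walks E v z. ?f p + ?f q)"
    unfolding gdist_def[of E w v z]
    by (rule INF_cong[OF refl], rule INF_ereal_add_right[symmetric]) (use False nonneg in auto)
  finally show ?thesis using concat by (metis (no_types, lifting) INF_greatest)
qed

lemma gdist_le_hop_dist: "gdist E w s v \<le> hop_dist R (gdist E w) h s v"
  unfolding hop_dist_def
proof (rule INF_greatest)
  fix ys assume "ys \<in> hop_walks R h s v"
  then have "ys \<noteq> []" "hd ys = s" "last ys = v" by (auto simp: hop_walks_def walks_def)
  then show "gdist E w s v \<le> walk_weight (gdist E w) ys"
    using walk_weight_ge_endpoints[of "gdist E w" ys] gdist_triangle gdist_self by simp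
qed

end

text \<open>An attained form of hop_dist R wt k s v \<le> c: walks witnessing it can be extended hop by hop.\<close>

definition hop_reach_within ::
    "('a \<times> 'a) set \<Rightarrow> ('a \<Rightarrow> 'a \<Rightarrow> ereal) \<Rightarrow> nat \<Rightarrow> 'a \<Rightarrow> 'a \<Rightarrow> ereal \<Rightarrow> bool"
  where "hop_reach_within R wt k s v c \<longleftrightarrow> (\<exists>ys\<in>hop_walks R k s v. walk_weight wt ys \<le> c)"

lemma hop_reach_within_refl: "hop_reach_within R wt k s s 0"
  unfolding hop_reach_within_def hop_walks_def walks_def by (rule bexI[of _ "[s]"]) auto

lemma hop_reach_within_mono:
  assumes "hop_reach_within R wt k s v c" "k \<le> k'" "c \<le> c'"
  shows "hop_reach_within R wt k' s v c'"
proof -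
  obtain ys where "ys \<in> hop_walks R k s v" "walk_weight wt ys \<le> c"
    using assms(1) unfolding hop_reach_within_def by blast
  then have "ys \<in> hop_walks R k' s v" "walk_weight wt ys \<le> c'"
    using assms(2,3) by (auto simp: hop_walks_def)
  then show ?thesis unfolding hop_reach_within_def by blast
qed

lemma hop_reach_within_snoc:
  assumes "hop_reach_within R wt k s v c" "(v, y) \<in> R"
  shows "hop_reach_within R wt (Suc k) s y (c + wt v y)"
proof -
  obtain ys where ys: "ys \<in> hop_walks R k s v" "walk_weight wt ys \<le> c"
    using assms(1) unfolding hop_reach_within_def by blast
  then have ys': "is_walk R ys" "hd ys = s" "last ys = v" "length ys \<le> Suc k"
    unfolding hop_walks_def walks_def by simp_all
  have snoc: "is_walk R (ys @ [y]) \<and> walk_weight wt (ys @ [y]) = walk_weight wt ys + wt v y"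
    using is_walk_snoc[OF ys'(1)] ys'(3) assms(2) by simp
  moreover have "ys \<noteq> []" using ys'(1) by auto
  ultimately have "ys @ [y] \<in> hop_walks R (Suc k) s y"
    using ys' by (simp add: hop_walks_def walks_def)
  moreover have "walk_weight wt (ys @ [y]) \<le> c + wt v y"
    using snoc add_right_mono[OF ys(2)] by simp
  ultimately show ?thesis unfolding hop_reach_within_def by blast
qed

lemma hop_reach_within_reach_hops:
  assumes "hop_reach_within R wt k s v c" "k \<le> h"
  shows "v \<in> reach_hops R h s \<and> hop_dist R wt h s v \<le> c"
proof -
  obtain ys where "ys \<in> hop_walks R k s v" "walk_weight wt ys \<le> c"
    using assms(1) unfolding hop_reach_within_def by blast
  moreover have "hop_walks R k s v \<subseteq> hop_walks R h s v"
    using assms(2) by (auto simp: hop_walks_def)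
  ultimately show ?thesis
    unfolding reach_hops_def hop_dist_def by (auto intro: INF_lower2)
qed

lemma reach_hops_mono: "k \<le> h \<Longrightarrow> reach_hops R k s \<subseteq> reach_hops R h s"
  unfolding reach_hops_def hop_walks_def by auto

lemma hop_reach_within_meet:
  assumes "hop_reach_within R wt h s v (ereal a)" "hop_reach_within R wt h t v (ereal b)" "a + b \<le> L"
  shows "\<exists>v\<in>reach_hops R h s \<inter> reach_hops R h t.
    hop_dist R wt h s v + hop_dist R wt h t v \<le> ereal L"
proof -
  have s: "v \<in> reach_hops R h s \<and> hop_dist R wt h s v \<le> ereal a"
    by (rule hop_reach_within_reach_hops[OF assms(1) order_refl])
  have t: "v \<in> reach_hops R h t \<and> hop_dist R wt h t v \<le> ereal b"
    by (rule hop_reach_within_reach_hops[OF assms(2) order_refl])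
  have "hop_dist R wt h s v + hop_dist R wt h t v \<le> ereal a + ereal b"
    using s t by (intro add_mono) simp_all
  also have "\<dots> \<le> ereal L" using assms(3) by simp
  finally show ?thesis using s t by blast
qed

locale knn_pivots =
  fixes V :: "'a set" and d :: "'a \<Rightarrow> 'a \<Rightarrow> ereal" and Ksel :: "'a \<Rightarrow> 'a set"
    and B :: "'a set" and p :: "'a \<Rightarrow> 'a"
  assumes d_commute: "d u v = d v u"
    and d_triangle: "d u z \<le> d u v + d v z"
    and d_nonneg: "0 \<le> d u v"
    and self_in_Ksel: "v \<in> V \<Longrightarrow> v \<in> Ksel v"
    and Ksel_closest: "v \<in> V \<Longrightarrow> a \<in> Ksel v \<Longrightarrow> b \<in> V - Ksel v \<Longrightarrow> d v a \<le> d v b"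
    and B_hits_Ksel: "v \<in> V \<Longrightarrow> Ksel v \<noteq> V \<Longrightarrow> Ksel v \<inter> B \<noteq> {}"
    and pivot_closest: "v \<in> V \<Longrightarrow> b \<in> B \<Longrightarrow> d v (p v) \<le> d v b"
begin

abbreviation H :: "('a \<times> 'a) set" where "H \<equiv> hop_graph V Ksel"

lemma hop_reach_within_Ksel:
  assumes "hop_reach_within H d k s v c" "v \<in> V" "y \<in> Ksel v"
  shows "hop_reach_within H d (Suc k) s y (c + d v y)"
proof (cases "y = v")
  case True
  then show ?thesis
    using hop_reach_within_mono[OF assms(1), of "Suc k" "c + d v y"] d_nonneg[of v y]
    by (simp add: add_increasing2)
next
  case False
  then show ?thesis
    using hop_reach_within_snoc[OF assms(1)] assms(2,3) by (simp add: hop_graph_def)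
qed

end

text \<open>The path x 0, ..., x m is kept abstract: seg i j stands for the weight of its part from
  x i to x j. This makes the reversed path an instance of the same locale.\<close>

locale knn_pivot_path = knn_pivots +
  fixes W :: real and m :: nat and x :: "nat \<Rightarrow> 'a" and seg :: "nat \<Rightarrow> nat \<Rightarrow> real"
  assumes seg_add: "i \<le> j \<Longrightarrow> j \<le> k \<Longrightarrow> k \<le> m \<Longrightarrow> seg i j + seg j k = seg i k"
    and seg_nonneg: "i \<le> j \<Longrightarrow> j \<le> m \<Longrightarrow> 0 \<le> seg i j"
    and seg_step_le: "q < m \<Longrightarrow> seg q (Suc q) \<le> W"
    and d_le_seg: "i \<le> j \<Longrightarrow> j \<le> m \<Longrightarrow> d (x i) (x j) \<le> ereal (seg i j)"
    and path_in_V: "q \<le> m \<Longrightarrow> x q \<in> V"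
begin

abbreviation prefix_reached :: "nat \<Rightarrow> nat \<Rightarrow> bool" where
  "prefix_reached k i \<equiv> \<forall>q\<le>i. hop_reach_within H d k (x 0) (x q) (ereal (seg 0 q))"

lemma seg_self: "i \<le> m \<Longrightarrow> seg i i = 0"
  using seg_add[of i i i] by simp

lemma hop_reach_within_Ksel_path:
  assumes "hop_reach_within H d k (x 0) (x i) (ereal (seg 0 i))"
    and "i \<le> q" "q \<le> m" "x q \<in> Ksel (x i)"
  shows "hop_reach_within H d (Suc k) (x 0) (x q) (ereal (seg 0 q))"
proof -
  have "hop_reach_within H d (Suc k) (x 0) (x q) (ereal (seg 0 i) + d (x i) (x q))"
    using hop_reach_within_Ksel[OF assms(1) path_in_V assms(4)] assms(2,3) by simp
  moreover have "ereal (seg 0 i) + d (x i) (x q) \<le> ereal (seg 0 i) + ereal (seg i q)"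
    using d_le_seg[OF assms(2,3)] by (rule add_left_mono)
  moreover have "ereal (seg 0 i) + ereal (seg i q) = ereal (seg 0 q)"
    using seg_add[of 0 i q] assms(2,3) by simp
  ultimately show ?thesis using hop_reach_within_mono by (metis order_refl)
qed

lemma B_near_Ksel_exit:
  assumes "i \<le> j" "j \<le> m" "x j \<notin> Ksel (x i)"
  shows "\<exists>b\<in>B. d (x i) b \<le> ereal (seg i j)"
proof -
  have xi: "x i \<in> V" and xj: "x j \<in> V - Ksel (x i)" using assms path_in_V by auto
  then obtain b where b: "b \<in> Ksel (x i)" "b \<in> B" using B_hits_Ksel by blast
  have "d (x i) b \<le> d (x i) (x j)" by (rule Ksel_closest[OF xi b(1) xj])
  also have "\<dots> \<le> ereal (seg i j)" by (rule d_le_seg[OF assms(1,2)])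
  finally show ?thesis using b(2) by blast
qed

lemma first_Ksel_exit:
  assumes "i \<le> q" "q \<le> m" "x q \<notin> Ksel (x i)"
  obtains j where "i \<le> j" "j < m" "x (Suc j) \<notin> Ksel (x i)"
    "\<And>q. i \<le> q \<Longrightarrow> q \<le> j \<Longrightarrow> x q \<in> Ksel (x i)"
proof -
  have "x i \<in> Ksel (x i)" using self_in_Ksel path_in_V assms(1,2) by simp
  then have "\<not> (i \<le> 0 \<and> x 0 \<notin> Ksel (x i))" by (cases i) auto
  then obtain j where j: "j < q" "\<forall>q'\<le>j. \<not> (i \<le> q' \<and> x q' \<notin> Ksel (x i))"
      "i \<le> Suc j" "x (Suc j) \<notin> Ksel (x i)"
    using ex_least_nat_less[of "\<lambda>q. i \<le> q \<and> x q \<notin> Ksel (x i)"] assms(1,3) by blast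
  have "i \<noteq> Suc j" using j(4) \<open>x i \<in> Ksel (x i)\<close> by auto
  show ?thesis
  proof (rule that[of j])
    show "i \<le> j" using j(3) \<open>i \<noteq> Suc j\<close> by simp
    show "j < m" using j(1) assms(2) by simp
    show "x (Suc j) \<notin> Ksel (x i)" by (rule j(4))
    show "x q' \<in> Ksel (x i)" if "i \<le> q'" "q' \<le> j" for q' using j(2) that by auto
  qed
qed

lemma greedy_hop_step:
  assumes i: "i < m" and progress: "real k * \<theta> \<le> seg 0 i" and prefix: "prefix_reached k i"
  shows "(\<exists>i\<le>m. x i \<in> reach_hops H (Suc k) (x 0) \<and> (\<exists>b\<in>B. d (x i) b \<le> ereal (\<theta> + W)))
    \<or> hop_reach_within H d (Suc k) (x 0) (x m) (ereal (seg 0 m))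
    \<or> (\<exists>j<m. real (Suc k) * \<theta> < seg 0 j \<and> prefix_reached (Suc k) j)"
proof (cases "\<exists>q\<le>m. i \<le> q \<and> x q \<notin> Ksel (x i)")
  case False
  then show ?thesis using hop_reach_within_Ksel_path[of k i m] prefix i by simp
next
  case True
  then obtain q where "i \<le> q" "q \<le> m" "x q \<notin> Ksel (x i)" by blast
  from first_Ksel_exit[OF this] obtain j where ij: "i \<le> j" "j < m"
    and exit: "x (Suc j) \<notin> Ksel (x i)"
    and inside: "\<And>q'. i \<le> q' \<Longrightarrow> q' \<le> j \<Longrightarrow> x q' \<in> Ksel (x i)"
    by blast
  have "prefix_reached (Suc k) j"
  proof (intro allI impI)
    fix q assume "q \<le> j"
    show "hop_reach_within H d (Suc k) (x 0) (x q) (ereal (seg 0 q))"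
    proof (cases "q \<le> i")
      case True
      then have "hop_reach_within H d k (x 0) (x q) (ereal (seg 0 q))" using prefix by simp
      then show ?thesis by (rule hop_reach_within_mono) simp_all
    next
      case False
      then show ?thesis
        using hop_reach_within_Ksel_path[of k i q] inside[of q] prefix \<open>q \<le> j\<close> ij by simp
    qed
  qed
  show ?thesis
  proof (cases "\<theta> < seg i j")
    case True
    then have "real (Suc k) * \<theta> < seg 0 j" using progress seg_add[of 0 i j] ij by (simp add: algebra_simps)
    then show ?thesis using \<open>prefix_reached (Suc k) j\<close> ij by blast
  next
    case False
    have "seg i (Suc j) \<le> \<theta> + W" using seg_add[of i j "Suc j"] seg_step_le[of j] ij False by simp
    obtain b where b: "b \<in> B" "d (x i) b \<le> ereal (seg i (Suc j))"
      using B_near_Ksel_exit[of i "Suc j"] ij exit by auto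
    then have "d (x i) b \<le> ereal (\<theta> + W)"
      using \<open>seg i (Suc j) \<le> \<theta> + W\<close> by (meson ereal_less_eq(3) order_trans)
    moreover have "hop_reach_within H d k (x 0) (x i) (ereal (seg 0 i))" using prefix by simp
    then have "x i \<in> reach_hops H (Suc k) (x 0)"
      using hop_reach_within_reach_hops[of H d k "x 0" "x i" _ "Suc k"] by simp
    ultimately show ?thesis using i b(1) by (intro disjI1 exI[of _ i]) auto
  qed
qed

lemma greedy_hops:
  "(\<exists>i\<le>m. x i \<in> reach_hops H k (x 0) \<and> (\<exists>b\<in>B. d (x i) b \<le> ereal (\<theta> + W)))
   \<or> hop_reach_within H d k (x 0) (x m) (ereal (seg 0 m))
   \<or> (\<exists>i<m. (k = 0 \<or> real k * \<theta> < seg 0 i) \<and> prefix_reached k i)"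
proof (induction k)
  case 0
  have "prefix_reached 0 0" using hop_reach_within_refl seg_self[of 0] by (simp add: zero_ereal_def)
  then show ?case
  proof (cases "m = 0")
    case True
    then show ?thesis using \<open>prefix_reached 0 0\<close> by simp
  next
    case False
    then show ?thesis using \<open>prefix_reached 0 0\<close> by blast
  qed
next
  case (Suc k)
  from Suc.IH consider
      (pivot) "\<exists>i\<le>m. x i \<in> reach_hops H k (x 0) \<and> (\<exists>b\<in>B. d (x i) b \<le> ereal (\<theta> + W))"
    | (reached) "hop_reach_within H d k (x 0) (x m) (ereal (seg 0 m))"
    | (prefix) i where "i < m" "k = 0 \<or> real k * \<theta> < seg 0 i" "prefix_reached k i"
    by metis
  then show ?case
  proof cases
    case pivot
    then show ?thesis using reach_hops_mono[of k "Suc k" H "x 0"] by (intro disjI1) auto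
  next
    case reached
    then have "hop_reach_within H d (Suc k) (x 0) (x m) (ereal (seg 0 m))"
      by (rule hop_reach_within_mono) simp_all
    then show ?thesis by (intro disjI2 disjI1)
  next
    case (prefix i)
    then have "real k * \<theta> \<le> seg 0 i" using seg_nonneg[of 0 i] by auto
    then show ?thesis using greedy_hop_step[OF prefix(1) _ prefix(3)] by simp
  qed
qed

lemma pivot_detour:
  assumes "i \<le> m" "b \<in> B" "d (x i) b \<le> ereal r"
  shows "d (x 0) (p (x i)) + d (p (x i)) (x m) \<le> ereal (seg 0 m + 2 * r)"
proof -
  have dp: "d (x i) (p (x i)) \<le> ereal r"
    using pivot_closest[OF path_in_V assms(2)] assms by (meson order_trans)
  have "d (x 0) (p (x i)) \<le> ereal (seg 0 i) + ereal r"
    using d_triangle[of "x 0" "p (x i)" "x i"] d_le_seg[of 0 i] assms(1) dp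
    by (meson add_mono order_trans zero_le)
  moreover have "d (p (x i)) (x m) \<le> ereal r + ereal (seg i m)"
    using d_triangle[of "p (x i)" "x m" "x i"] d_le_seg[of i m] assms(1) dp d_commute
    by (metis add_mono order_trans order_refl)
  ultimately have "d (x 0) (p (x i)) + d (p (x i)) (x m)
      \<le> (ereal (seg 0 i) + ereal r) + (ereal r + ereal (seg i m))"
    by (rule add_mono)
  then show ?thesis using seg_add[of 0 i m] assms(1) by (simp add: ac_simps)
qed

lemma reversed_path:
  "knn_pivot_path V d Ksel B p W m (\<lambda>q. x (m - q)) (\<lambda>i j. seg (m - j) (m - i))"
proof unfold_locales
  fix i j k assume "i \<le> j" "j \<le> k" "k \<le> m"
  then show "seg (m - j) (m - i) + seg (m - k) (m - j) = seg (m - k) (m - i)"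
    using seg_add[of "m - k" "m - j" "m - i"] by (simp add: add.commute)
next
  fix i j assume "i \<le> j" "j \<le> m"
  then have "m - j \<le> m - i" "m - i \<le> m" by auto
  then show "0 \<le> seg (m - j) (m - i)" and "d (x (m - i)) (x (m - j)) \<le> ereal (seg (m - j) (m - i))"
    using seg_nonneg d_le_seg d_commute[of "x (m - i)"] by simp_all
next
  fix q assume "q < m"
  then have "m - q = Suc (m - Suc q)" by simp
  then show "seg (m - Suc q) (m - q) \<le> W" using seg_step_le[of "m - Suc q"] \<open>q < m\<close> by simp
next
  fix q show "x (m - q) \<in> V" using path_in_V by simp
qed

lemma greedy_hops_half:
  assumes "0 < h"
  shows "(\<exists>i\<le>m. x i \<in> reach_hops H h (x 0) \<and> B \<noteq> {} \<and>
            d (x 0) (p (x i)) + d (p (x i)) (x m) \<le> ereal (seg 0 m + seg 0 m / h + 2 * W))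
    \<or> hop_reach_within H d h (x 0) (x m) (ereal (seg 0 m))
    \<or> (\<exists>i<m. seg 0 m < 2 * seg 0 i \<and> prefix_reached h i)"
proof -
  define \<theta> where "\<theta> = seg 0 m / (2 * h)"
  have half: "real h * \<theta> = seg 0 m / 2"
    and detour: "seg 0 m + 2 * (\<theta> + W) = seg 0 m + seg 0 m / h + 2 * W"
    using assms by (simp_all add: \<theta>_def field_simps)
  have "d (x 0) (p (x i)) + d (p (x i)) (x m) \<le> ereal (seg 0 m + seg 0 m / h + 2 * W)"
    if "i \<le> m" "b \<in> B" "d (x i) b \<le> ereal (\<theta> + W)" for i b
    using pivot_detour[OF that] detour by metis
  then show ?thesis using greedy_hops[of h \<theta>] assms half by (auto simp: field_simps)
qed

lemma prefix_suffix_overlap: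
  assumes "i < m" "seg 0 m < 2 * seg 0 i" "i' < m" "seg 0 m < 2 * seg (m - i') m"
  shows "m - i \<le> i'"
proof (rule ccontr)
  assume "\<not> m - i \<le> i'"
  then have "i \<le> m - i'" by linarith
  then have "seg 0 i + seg i (m - i') + seg (m - i') m = seg 0 m" "0 \<le> seg i (m - i')"
    using seg_add[of 0 i "m - i'"] seg_add[of 0 "m - i'" m] seg_nonneg[of i "m - i'"] by auto
  then show False using assms(2,4) by linarith
qed

lemma hop_meet_or_pivot:
  assumes "0 < h"
  shows "(\<exists>v\<in>reach_hops H h (x 0) \<inter> reach_hops H h (x m).
            hop_dist H d h (x 0) v + hop_dist H d h (x m) v \<le> ereal (seg 0 m))
       \<or> (\<exists>v\<in>reach_hops H h (x 0) \<union> reach_hops H h (x m). B \<noteq> {} \<and>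
            d (x 0) (p v) + d (p v) (x m) \<le> ereal (seg 0 m + seg 0 m / h + 2 * W))"
    (is "?meet \<or> ?pivot")
proof -
  interpret rev: knn_pivot_path V d Ksel B p W m "\<lambda>q. x (m - q)" "\<lambda>i j. seg (m - j) (m - i)"
    by (rule reversed_path)
  have refl: "hop_reach_within H d h v v (ereal 0)" for v
    using hop_reach_within_refl by (simp add: zero_ereal_def)
  have pivot_rev: "d (x m) (p v) + d (p v) (x 0) = d (x 0) (p v) + d (p v) (x m)" for v
    using d_commute by (simp add: add.commute)
  from greedy_hops_half[OF assms] consider
      (pivot) "?pivot"
    | (reached) "hop_reach_within H d h (x 0) (x m) (ereal (seg 0 m))"
    | (prefix) i where "i < m" "seg 0 m < 2 * seg 0 i" "prefix_reached h i"
    by blast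
  then show ?thesis
  proof cases
    case reached
    then show ?thesis using hop_reach_within_meet[OF reached refl, where L = "seg 0 m"] by simp
  next
    case (prefix i)
    from rev.greedy_hops_half[OF assms] consider
        (pivot) "?pivot"
      | (reached) "hop_reach_within H d h (x m) (x 0) (ereal (seg 0 m))"
      | (suffix) i' where "i' < m" "seg 0 m < 2 * seg (m - i') m"
          "\<forall>q\<le>i'. hop_reach_within H d h (x m) (x (m - q)) (ereal (seg (m - q) m))"
      using pivot_rev by auto
    then show ?thesis
    proof cases
      case reached
      then show ?thesis using hop_reach_within_meet[OF refl reached, where L = "seg 0 m"] by simp
    next
      case (suffix i')
      have "hop_reach_within H d h (x 0) (x i) (ereal (seg 0 i))" using prefix(3) by simp
      moreover have "hop_reach_within H d h (x m) (x i) (ereal (seg i m))"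
        using suffix(3) prefix_suffix_overlap[OF prefix(1,2) suffix(1,2)] prefix(1)
        by (metis diff_diff_cancel less_imp_le)
      moreover have "seg 0 i + seg i m \<le> seg 0 m" using seg_add[of 0 i m] prefix(1) by simp
      ultimately show ?thesis by (intro disjI1 hop_reach_within_meet)
    qed simp
  qed simp
qed

end

lemma gdist_knn_pivots:
  assumes "sym E" and weights: "\<And>u v. (u, v) \<in> E \<Longrightarrow> w u v = w v u \<and> 0 \<le> w u v"
    and "knn_sets V E w K Ksel" "pivot_fun V E w piv" "B \<subseteq> V"
    and hits: "\<And>v. v \<in> V \<Longrightarrow> Ksel v \<noteq> V \<Longrightarrow> Ksel v \<inter> B \<noteq> {}"
  shows "knn_pivots V (gdist E w) Ksel B (piv B)"
proof
  have nonneg: "\<And>u v. (u, v) \<in> E \<Longrightarrow> 0 \<le> w u v" using weights by blast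
  show "gdist E w u v = gdist E w v u" for u v
    using gdist_commute[of E w, OF nonneg \<open>sym E\<close>] weights by blast
  show "gdist E w u z \<le> gdist E w u v + gdist E w v z" for u v z
    by (rule gdist_triangle[of E w, OF nonneg])
  show "0 \<le> gdist E w u v" for u v
    by (rule gdist_nonneg[of E w, OF nonneg])
  show "v \<in> V \<Longrightarrow> v \<in> Ksel v"
    and "v \<in> V \<Longrightarrow> a \<in> Ksel v \<Longrightarrow> b \<in> V - Ksel v \<Longrightarrow> gdist E w v a \<le> gdist E w v b"
    for v a b using \<open>knn_sets V E w K Ksel\<close> unfolding knn_sets_def by blast+
  show "v \<in> V \<Longrightarrow> Ksel v \<noteq> V \<Longrightarrow> Ksel v \<inter> B \<noteq> {}" for v by (rule hits)
  show "v \<in> V \<Longrightarrow> b \<in> B \<Longrightarrow> gdist E w v (piv B v) \<le> gdist E w v b" for v b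
    using \<open>pivot_fun V E w piv\<close> \<open>B \<subseteq> V\<close> unfolding pivot_fun_def by blast
qed

lemma walk_knn_pivot_path:
  assumes "knn_pivots V (gdist E w) Ksel B p" "E \<subseteq> V \<times> V"
    and weights: "\<And>u v. (u, v) \<in> E \<Longrightarrow> 0 \<le> w u v \<and> w u v \<le> W"
    and xs: "xs \<in> walks E s t" "t \<in> V"
  shows "knn_pivot_path V (gdist E w) Ksel B p W (length xs - 1) ((!) xs)
    (\<lambda>i j. \<Sum>q = i..<j. w (xs ! q) (xs ! Suc q))"
proof -
  have walk: "is_walk E xs" "xs \<noteq> []" "last xs = t" using xs(1) by (auto simp: walks_def)
  have edge: "(xs ! q, xs ! Suc q) \<in> E" if "q < length xs - 1" for q
    using walk(1) that unfolding is_walk_def by simp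
  show ?thesis
  proof (intro knn_pivot_path.intro assms(1) knn_pivot_path_axioms.intro)
    fix i j k :: nat assume "i \<le> j" "j \<le> k"
    then show "(\<Sum>q = i..<j. w (xs ! q) (xs ! Suc q)) + (\<Sum>q = j..<k. w (xs ! q) (xs ! Suc q))
        = (\<Sum>q = i..<k. w (xs ! q) (xs ! Suc q))"
      by (rule sum.atLeastLessThan_concat)
  next
    fix i j :: nat assume "j \<le> length xs - 1"
    then show "0 \<le> (\<Sum>q = i..<j. w (xs ! q) (xs ! Suc q))"
      using edge weights by (intro sum_nonneg) fastforce
  next
    fix q assume "q < length xs - 1"
    then show "(\<Sum>q' = q..<Suc q. w (xs ! q') (xs ! Suc q')) \<le> W"
      using edge weights by simp
  next
    fix i j :: nat assume "i \<le> j" "j \<le> length xs - 1"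
    moreover have "j < length xs" using walk(2) \<open>j \<le> length xs - 1\<close> by (cases xs) auto
    ultimately have "map ((!) xs) [i..<Suc j] \<in> walks E (xs ! i) (xs ! j)
        \<and> walk_weight w (map ((!) xs) [i..<Suc j]) = (\<Sum>q = i..<j. w (xs ! q) (xs ! Suc q))"
      using walk_segment[OF walk(1)] by blast
    then show "gdist E w (xs ! i) (xs ! j) \<le> ereal (\<Sum>q = i..<j. w (xs ! q) (xs ! Suc q))"
      using gdist_le_walk_weight weights by metis
  next
    fix q assume "q \<le> length xs - 1"
    then show "xs ! q \<in> V"
      using edge[of q] walk \<open>E \<subseteq> V \<times> V\<close> xs(2)
      by (cases "q < length xs - 1") (auto simp: last_conv_nth)
  qed
qed

lemma ereal_affine_INF:
  fixes c b :: real and f :: "'i \<Rightarrow> ereal"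
  assumes "0 < c"
  shows "ereal c * (INF i\<in>I. f i) + ereal b = (INF i\<in>I. ereal c * f i + ereal b)"
proof -
  have "ereal c * (INF i\<in>I. f i) = (INF i\<in>I. ereal c * f i)"
  proof -
    have "mono ((*) (ereal c))" using assms by (simp add: ereal_mult_left_mono mono_def)
    moreover have "bij ((*) (ereal c))"
      using assms by (intro bij_betw_byWitness[of _ "\<lambda>x. x / ereal c"])
        (auto simp: ereal_mult_divide ereal_divide_eq)
    ultimately show ?thesis using mono_bij_Inf[of "(*) (ereal c)" "f ` I"] by (simp add: image_comp)
  qed
  moreover have "(INF i\<in>I. g i) + ereal b = (INF i\<in>I. g i + ereal b)" for g :: "'i \<Rightarrow> ereal"
  proof -
    have "mono (\<lambda>x. x + ereal b)" by (simp add: add_right_mono mono_def)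
    moreover have "bij (\<lambda>x. x + ereal b)"
    proof (intro bij_betw_byWitness[of _ "\<lambda>x. x - ereal b"])
      have "x + ereal b - ereal b = x" "x - ereal b + ereal b = x" for x by (cases x; simp)+
      then show "\<forall>x\<in>UNIV. x + ereal b - ereal b = x" "\<forall>x\<in>UNIV. x - ereal b + ereal b = x"
        by simp_all
    qed auto
    ultimately show ?thesis using mono_bij_Inf[of "\<lambda>x. x + ereal b" "g ` I"] by (simp add: image_comp)
  qed
  ultimately show ?thesis by simp
qed

lemma gdist_le_dist_query:
  assumes nonneg: "\<And>u v. (u, v) \<in> E \<Longrightarrow> 0 \<le> w u v"
    and "sym E" "\<And>a b. (a, b) \<in> E \<Longrightarrow> w a b = w b a"
  shows "gdist E w s t \<le> dist_query V E w Ksel piv h B s t"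
proof -
  let ?R = "hop_graph V Ksel"
  have via_hops: "gdist E w s t \<le> hop_dist ?R (gdist E w) h s v + hop_dist ?R (gdist E w) h t v" for v
  proof -
    have "gdist E w s t \<le> gdist E w s v + gdist E w t v"
      using gdist_triangle[of E w, OF nonneg, of s t v] gdist_commute[of E w, OF nonneg assms(2,3), of v t]
      by simp
    also have "\<dots> \<le> hop_dist ?R (gdist E w) h s v + hop_dist ?R (gdist E w) h t v"
      by (intro add_mono gdist_le_hop_dist[of E w, OF nonneg])
    finally show ?thesis .
  qed
  have via_pivot: "gdist E w s t \<le> gdist E w s b + gdist E w b t" for b
    by (rule gdist_triangle[of E w, OF nonneg])
  show ?thesis
    unfolding dist_query_def Let_def using via_hops via_pivot by (auto intro!: INF_greatest)
qed

lemma dist_query_le_walk_weight: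
  assumes "knn_pivots V (gdist E w) Ksel B (piv B)" "E \<subseteq> V \<times> V"
    and weights: "\<And>u v. (u, v) \<in> E \<Longrightarrow> 0 \<le> w u v \<and> w u v \<le> W"
    and xs: "xs \<in> walks E s t" "t \<in> V" and "0 \<le> W" "0 < h"
  shows "dist_query V E w Ksel piv h B s t
    \<le> ereal (walk_weight w xs + walk_weight w xs / h + 2 * W)"
proof -
  define m where "m = length xs - 1"
  interpret path: knn_pivot_path V "gdist E w" Ksel B "piv B" W m "(!) xs"
      "\<lambda>i j. \<Sum>q = i..<j. w (xs ! q) (xs ! Suc q)"
    unfolding m_def by (rule walk_knn_pivot_path[OF assms(1,2) weights xs])
  have "is_walk E xs" "hd xs = s" "last xs = t" "xs \<noteq> []" using xs(1) by (auto simp: walks_def)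
  then have ends: "xs ! 0 = s" "xs ! m = t" "(s, t) \<in> E\<^sup>*"
    using is_walk_rtrancl[of E xs] unfolding m_def by (auto simp: hd_conv_nth last_conv_nth)
  have weight: "(\<Sum>q = 0..<m. w (xs ! q) (xs ! Suc q)) = walk_weight w xs"
    unfolding walk_weight_def m_def by (simp add: atLeast0LessThan)
  let ?R = "hop_graph V Ksel" and ?L = "walk_weight w xs"
  have "0 \<le> ?L" using path.seg_nonneg[of 0 m] weight by simp
  then have "?L \<le> ?L + ?L / h + 2 * W" using \<open>0 \<le> W\<close> by simp
  from path.hop_meet_or_pivot[OF \<open>0 < h\<close>, unfolded ends weight] consider
      (meet) v where "v \<in> reach_hops ?R h s \<inter> reach_hops ?R h t"
        "hop_dist ?R (gdist E w) h s v + hop_dist ?R (gdist E w) h t v \<le> ereal ?L"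
    | (pivot) v where "v \<in> reach_hops ?R h s \<union> reach_hops ?R h t" "B \<noteq> {}"
        "gdist E w s (piv B v) + gdist E w (piv B v) t \<le> ereal (?L + ?L / h + 2 * W)"
    by blast
  then show ?thesis
  proof cases
    case meet
    have "hop_dist ?R (gdist E w) h s v + hop_dist ?R (gdist E w) h t v \<le> ereal (?L + ?L / h + 2 * W)"
      using meet(2) \<open>?L \<le> ?L + ?L / h + 2 * W\<close> by (meson ereal_less_eq(3) order_trans)
    then show ?thesis using meet(1) ends(3)
      by (auto simp: dist_query_def Let_def intro!: min.coboundedI1 INF_lower2)
  next
    case pivot
    then show ?thesis using ends(3)
      by (auto simp: dist_query_def Let_def intro!: min.coboundedI2 INF_lower2)
  qed
qed


lemma dist_query_le_gdist:
  assumes "knn_pivots V (gdist E w) Ksel B (piv B)" "E \<subseteq> V \<times> V"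
    and weights: "\<And>u v. (u, v) \<in> E \<Longrightarrow> 0 \<le> w u v \<and> w u v \<le> W"
    and "t \<in> V" "0 \<le> W" "0 < h" "1 / h \<le> \<epsilon>"
  shows "dist_query V E w Ksel piv h B s t \<le> ereal (1 + \<epsilon>) * gdist E w s t + ereal (2 * W)"
proof -
  have "dist_query V E w Ksel piv h B s t \<le> ereal (1 + \<epsilon>) * ereal (walk_weight w xs) + ereal (2 * W)"
    if "xs \<in> walks E s t" for xs
  proof -
    have "0 \<le> walk_weight w xs"
      using that weights by (intro walk_weight_nonneg[of E]) (auto simp: walks_def)
    then have "walk_weight w xs / h \<le> \<epsilon> * walk_weight w xs"
      using mult_right_mono[OF \<open>1 / h \<le> \<epsilon>\<close>] by simp
    then have "walk_weight w xs + walk_weight w xs / h + 2 * W \<le> (1 + \<epsilon>) * walk_weight w xs + 2 * W"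
      by (simp add: algebra_simps)
    then show ?thesis
      using dist_query_le_walk_weight[of V E w Ksel B piv W, OF assms(1,2) weights that assms(4,5,6)]
      by (simp add: order_trans)
  qed
  moreover have "0 < 1 / real h" using \<open>0 < h\<close> by simp
  then have "0 < 1 + \<epsilon>" using \<open>1 / h \<le> \<epsilon>\<close> by linarith
  moreover have "gdist E w s t = (INF xs\<in>walks E s t. ereal (walk_weight w xs))"
    unfolding gdist_def walk_weight_ereal[abs_def] ..
  ultimately show ?thesis by (simp add: ereal_affine_INF INF_greatest)
qed


lemma prob_Pi_bernoulli_all_False:
  assumes "finite V" "S \<subseteq> V" "0 \<le> p" "p \<le> 1"
  shows "measure_pmf.prob (Pi_pmf V False (\<lambda>_. bernoulli_pmf p)) {f. \<forall>u\<in>S. \<not> f u} = (1 - p) ^ card S"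
proof -
  have "{f. \<forall>u\<in>S. \<not> f u} = Pi V (\<lambda>x. if x \<in> S then {False} else UNIV)"
    using assms(2) by (auto simp: Pi_def)
  moreover have "measure_pmf.prob (Pi_pmf V False (\<lambda>_. bernoulli_pmf p))
      (Pi V (\<lambda>x. if x \<in> S then {False} else UNIV)) = (\<Prod>x\<in>V. if x \<in> S then 1 - p else 1)"
    unfolding measure_Pi_pmf_Pi[OF assms(1)]
    by (rule prod.cong) (use assms(3,4) in \<open>auto simp: measure_pmf_single pmf_bernoulli_False\<close>)
  moreover have "(\<Prod>x\<in>V. if x \<in> S then 1 - p else 1) = (1 - p) ^ card S"
    using assms(1,2) by (simp add: prod.If_cases Int_absorb1)
  ultimately show ?thesis by simp
qed

lemma one_minus_min_power_le_powr:
  fixes C :: real and n K :: nat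
  assumes "0 \<le> C" "0 < K" "1 \<le> n"
  shows "(1 - min 1 (C * ln n / K)) ^ K \<le> real n powr (- C)"
proof (cases "1 \<le> C * ln n / K")
  case True
  then show ?thesis using assms by (simp add: power_0_left)
next
  case False
  let ?q = "C * ln n / K"
  have "(1 - ?q) ^ K \<le> exp (- ?q) ^ K"
    using False assms exp_ge_add_one_self[of "- ?q"] by (intro power_mono) auto
  also have "\<dots> = real n powr (- C)"
    using assms by (simp add: powr_def flip: exp_of_nat_mult)
  finally show ?thesis using False by simp
qed

lemma prob_hits_all:
  fixes S :: "'i \<Rightarrow> 'a set" and C :: real
  assumes "finite V" "V \<noteq> {}" "finite I" "card I \<le> card V" "0 \<le> C" "0 < K"
    and S: "\<And>i. i \<in> I \<Longrightarrow> S i \<subseteq> V \<and> K \<le> card (S i)"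
  defines "M \<equiv> Pi_pmf V False (\<lambda>_. bernoulli_pmf (min 1 (C * ln (card V) / K)))"
  shows "1 - real (card V) powr (1 - C) \<le> measure_pmf.prob M {f. \<forall>i\<in>I. \<exists>u\<in>S i. f u}"
proof -
  have "card V \<noteq> 0" using assms(1,2) by simp
  let ?n = "card V" and ?p = "min 1 (C * ln (card V) / K)"
  have p: "0 \<le> ?p" "?p \<le> 1" using assms(5) \<open>card V \<noteq> 0\<close> by auto
  have miss: "measure_pmf.prob M {f. \<forall>u\<in>S i. \<not> f u} \<le> real ?n powr (- C)" if "i \<in> I" for i
  proof -
    have "measure_pmf.prob M {f. \<forall>u\<in>S i. \<not> f u} = (1 - ?p) ^ card (S i)"
      unfolding M_def using prob_Pi_bernoulli_all_False[OF assms(1)] S[OF that] p by blast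
    also have "\<dots> \<le> (1 - ?p) ^ K" using S[OF that] p by (intro power_decreasing) auto
    also have "\<dots> \<le> real ?n powr (- C)"
      using one_minus_min_power_le_powr[of C K ?n] assms(5,6) \<open>card V \<noteq> 0\<close> by simp
    finally show ?thesis .
  qed
  have "measure_pmf.prob M (UNIV - {f. \<forall>i\<in>I. \<exists>u\<in>S i. f u})
      \<le> (\<Sum>i\<in>I. measure_pmf.prob M {f. \<forall>u\<in>S i. \<not> f u})"
  proof -
    have "UNIV - {f. \<forall>i\<in>I. \<exists>u\<in>S i. f u} = (\<Union>i\<in>I. {f. \<forall>u\<in>S i. \<not> f u})" by auto
    then show ?thesis by (simp add: measure_pmf.finite_measure_subadditive_finite[OF assms(3)])
  qed
  also have "\<dots> \<le> real (card I) * real ?n powr (- C)"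
    using sum_mono[OF miss] by simp
  also have "\<dots> \<le> real ?n * real ?n powr (- C)"
    using assms(4) by (intro mult_right_mono) auto
  also have "\<dots> = real ?n powr (1 - C)"
    using \<open>card V \<noteq> 0\<close> by (simp add: powr_diff powr_minus divide_inverse)
  finally show ?thesis using measure_pmf.prob_compl[of "{f. \<forall>i\<in>I. \<exists>u\<in>S i. f u}" M] by simp
qed


lemma nat_ceiling_inverse_bounds:
  fixes \<epsilon> :: real
  assumes "0 < \<epsilon>"
  shows "0 < nat \<lceil>1 / \<epsilon>\<rceil>" "1 / nat \<lceil>1 / \<epsilon>\<rceil> \<le> \<epsilon>"
proof -
  have "1 / \<epsilon> \<le> nat \<lceil>1 / \<epsilon>\<rceil>" by (rule real_nat_ceiling_ge)
  moreover have "0 < 1 / \<epsilon>" using assms by simp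
  ultimately have pos: "0 < real (nat \<lceil>1 / \<epsilon>\<rceil>)" by linarith
  then show "0 < nat \<lceil>1 / \<epsilon>\<rceil>" by simp
  have "1 / nat \<lceil>1 / \<epsilon>\<rceil> \<le> 1 / (1 / \<epsilon>)"
    by (rule divide_left_mono[OF \<open>1 / \<epsilon> \<le> nat \<lceil>1 / \<epsilon>\<rceil>\<close>]) (use pos assms in simp_all)
  then show "1 / nat \<lceil>1 / \<epsilon>\<rceil> \<le> \<epsilon>" by simp
qed

lemma dist_query_bounds:
  fixes \<epsilon> :: real
  assumes "E \<subseteq> V \<times> V" "sym E"
    and weights: "\<forall>(u, v)\<in>E. w u v = w v u \<and> 0 \<le> w u v \<and> w u v \<le> W"
    and "0 \<le> W" "0 < \<epsilon>" "knn_sets V E w K Ksel" "pivot_fun V E w piv" "B \<subseteq> V"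
    and hits: "\<And>v. v \<in> V \<Longrightarrow> Ksel v \<noteq> V \<Longrightarrow> Ksel v \<inter> B \<noteq> {}" and "t \<in> V"
  shows "gdist E w s t \<le> dist_query V E w Ksel piv (nat \<lceil>1 / \<epsilon>\<rceil>) B s t"
    and "dist_query V E w Ksel piv (nat \<lceil>1 / \<epsilon>\<rceil>) B s t
      \<le> ereal (1 + \<epsilon>) * gdist E w s t + ereal (2 * W)"
proof -
  have nonneg_sym: "\<And>u v. (u, v) \<in> E \<Longrightarrow> w u v = w v u \<and> 0 \<le> w u v"
    and bounded: "\<And>u v. (u, v) \<in> E \<Longrightarrow> 0 \<le> w u v \<and> w u v \<le> W"
    using weights by auto
  then have nonneg: "\<And>u v. (u, v) \<in> E \<Longrightarrow> 0 \<le> w u v"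
    and symmetric: "\<And>u v. (u, v) \<in> E \<Longrightarrow> w u v = w v u" by auto
  show "gdist E w s t \<le> dist_query V E w Ksel piv (nat \<lceil>1 / \<epsilon>\<rceil>) B s t"
    by (rule gdist_le_dist_query[OF nonneg \<open>sym E\<close> symmetric])
  have pivots: "knn_pivots V (gdist E w) Ksel B (piv B)"
    by (rule gdist_knn_pivots[OF \<open>sym E\<close> nonneg_sym assms(6,7,8) hits])
  show "dist_query V E w Ksel piv (nat \<lceil>1 / \<epsilon>\<rceil>) B s t
      \<le> ereal (1 + \<epsilon>) * gdist E w s t + ereal (2 * W)"
    by (rule dist_query_le_gdist[where piv = piv, OF pivots \<open>E \<subseteq> V \<times> V\<close> bounded \<open>t \<in> V\<close> \<open>0 \<le> W\<close>
      nat_ceiling_inverse_bounds[OF \<open>0 < \<epsilon>\<close>]])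
qed

lemma oracle_correct_whp:
  fixes V :: "'a set" and K :: nat and C \<epsilon> :: real
  assumes "finite V" "V \<noteq> {}" "E \<subseteq> V \<times> V" "sym E"
    and weights: "\<forall>(u, v)\<in>E. w u v = w v u \<and> 0 \<le> w u v \<and> w u v \<le> W"
    and "0 \<le> W" "0 < K" "0 < \<epsilon>" "0 \<le> C"
    and knn: "knn_sets V E w K Ksel" and piv: "pivot_fun V E w piv"
  shows "measure_pmf.prob
      (Pi_pmf V False (\<lambda>_. bernoulli_pmf (min 1 (C * ln (real (card V)) / real K))))
      {f. \<forall>s\<in>V. \<forall>t\<in>V.
           gdist E w s t \<le> dist_query V E w Ksel piv (nat \<lceil>1 / \<epsilon>\<rceil>) {v. f v} s t \<and>
           dist_query V E w Ksel piv (nat \<lceil>1 / \<epsilon>\<rceil>) {v. f v} s t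
             \<le> ereal (1 + \<epsilon>) * gdist E w s t + ereal (2 * W)}
    \<ge> 1 - real (card V) powr (- (C - 1))"
    (is "measure_pmf.prob ?M ?good \<ge> _")
proof -
  define hits where "hits = {f. \<forall>v\<in>{v\<in>V. Ksel v \<noteq> V}. \<exists>u\<in>Ksel v. f u}"
  have "1 - real (card V) powr (1 - C) \<le> measure_pmf.prob ?M hits"
    unfolding hits_def
  proof (rule prob_hits_all)
    fix v assume v: "v \<in> {v \<in> V. Ksel v \<noteq> V}"
    then have "Ksel v \<subseteq> V" "card (Ksel v) = min K (card V)"
      using knn unfolding knn_sets_def by auto
    moreover have "card (Ksel v) < card V"
      using v \<open>Ksel v \<subseteq> V\<close> psubset_card_mono[OF \<open>finite V\<close>] by blast
    ultimately show "Ksel v \<subseteq> V \<and> K \<le> card (Ksel v)" by linarith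
  qed (use assms card_mono[of V "{v \<in> V. Ksel v \<noteq> V}"] in simp_all)
  also have "\<dots> = measure_pmf.prob ?M (hits \<inter> set_pmf ?M)"
    by (simp add: measure_Int_set_pmf)
  also have "\<dots> \<le> measure_pmf.prob ?M ?good"
  proof (rule measure_pmf.finite_measure_mono)
    show "hits \<inter> set_pmf ?M \<subseteq> ?good"
    proof
      fix f assume f: "f \<in> hits \<inter> set_pmf ?M"
      then have "{v. f v} \<subseteq> V" using set_Pi_pmf_subset[OF \<open>finite V\<close>, of False] by blast
      moreover have "v \<in> V \<Longrightarrow> Ksel v \<noteq> V \<Longrightarrow> Ksel v \<inter> {v. f v} \<noteq> {}" for v
        using f unfolding hits_def by blast
      ultimately show "f \<in> ?good"
        using dist_query_bounds[OF \<open>E \<subseteq> V \<times> V\<close> \<open>sym E\<close> weights \<open>0 \<le> W\<close> \<open>0 < \<epsilon>\<close> knn piv]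
        by blast
    qed
  qed simp
  finally show ?thesis by simp
qed

theorem lemma9:
  shows "\<exists>C0>0. \<forall>C\<ge>C0. \<exists>c>0. \<forall>(V::'a set) E w W (K::nat) (\<epsilon>::real) Ksel piv.
    finite V \<and> V \<noteq> {} \<and> E \<subseteq> V \<times> V \<and> sym E \<and>
    (\<forall>(u, v)\<in>E. w u v = w v u \<and> 0 \<le> w u v \<and> w u v \<le> W) \<and>
    (E \<noteq> {} \<longrightarrow> (\<exists>(u, v)\<in>E. w u v = W)) \<and> 0 \<le> W \<and>
    0 < K \<and> 0 < \<epsilon> \<and> knn_sets V E w K Ksel \<and> pivot_fun V E w piv
    \<longrightarrow>
    measure_pmf.prob
      (Pi_pmf V False (\<lambda>_. bernoulli_pmf (min 1 (C * ln (real (card V)) / real K))))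
      {f. \<forall>s\<in>V. \<forall>t\<in>V.
           gdist E w s t \<le> dist_query V E w Ksel piv (nat \<lceil>1 / \<epsilon>\<rceil>) {v. f v} s t \<and>
           dist_query V E w Ksel piv (nat \<lceil>1 / \<epsilon>\<rceil>) {v. f v} s t
             \<le> ereal (1 + \<epsilon>) * gdist E w s t + ereal (2 * W)}
    \<ge> 1 - real (card V) powr (- c)"
  apply (rule exI[of _ "2::real"], intro conjI allI impI)
   apply simp
  subgoal for C
    apply (rule exI[of _ "C - 1"], intro conjI allI impI)
     apply simp
    apply (elim conjE)
    apply (rule oracle_correct_whp)
              apply simp_all
    done
  done

end
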